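(* Let $\lambda,\mu\in P^+$ for $\mathfrak g$ of type $A_2$. Then there exists a bijection $\mathcal S^{A}_{\lambda,\mu}\to\mathcal T^{A}_{\lambda,\mu}$.
   Context: $m_i=\lambda(h_i)$, $n_i=\mu(h_i)$ ($i=1,2$) are non-negative integers. $\mathcal S^{A}_{\lambda,\mu}=\{(a,b,c)\in\mathbb Z_+^3: a\le\min\{m_1,n_1\},\ c\le\min\{m_2,n_2\},\ a+b+c\le\min\{m_1+m_2,n_1+n_2\},\ 2a+b\le m_1+n_1,\ 2c+b\le m_2+n_2\}$. $\mathcal T^{A}_{\lambda,\mu}=\{(a,b,c)\in\mathbb Z_+^3: b\le\min\{m_2,n_1\},\ a+b-c\le n_1,\ b+c-a\le m_2,\ c\le n_2,\ a\le m_1,\ 2a+b-c\le m_1+n_1,\ 2c+b-a\le m_2+n_2\}$. *)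

theory Defs
  imports Main
begin

text \<open>A dominant integral weight of type A2 is determined by the non-negative integers
  m1 = lambda(h1), m2 = lambda(h2). Triples live in Z_+^3, rendered as nat^3.\<close>

definition S_A :: "nat \<Rightarrow> nat \<Rightarrow> nat \<Rightarrow> nat \<Rightarrow> (nat \<times> nat \<times> nat) set" where
  "S_A m1 m2 n1 n2 = {(a, b, c). a \<le> min m1 n1 \<and> c \<le> min m2 n2 \<and>
      a + b + c \<le> min (m1 + m2) (n1 + n2) \<and> 2*a + b \<le> m1 + n1 \<and> 2*c + b \<le> m2 + n2}"

definition T_A :: "nat \<Rightarrow> nat \<Rightarrow> nat \<Rightarrow> nat \<Rightarrow> (nat \<times> nat \<times> nat) set" where
  "T_A m1 m2 n1 n2 = {(a, b, c). b \<le> min m2 n1 \<and>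
      int a + int b - int c \<le> int n1 \<and> int b + int c - int a \<le> int m2 \<and>
      c \<le> n2 \<and> a \<le> m1 \<and>
      2 * int a + int b - int c \<le> int m1 + int n1 \<and>
      2 * int c + int b - int a \<le> int m2 + int n2}"

end

theory Submission
  imports Defs
begin

text \<open>In the coordinates x = a + b, y = b + c (which determine a triple together with b),
  both sets fibre over the pairs (x, y): the fibre of S is the interval
  S_lower x y \<le> b \<le> min x y, the fibre of T is the interval T_lower x y \<le> b \<le> T_upper x y,
  cut out by two further conditions on x and y alone. Whenever one of them is nonempty so is
  the other, and they have the same length; translating b in each fibre by
  T_lower x y - S_lower x y is therefore a bijection.\<close>

definition shift_middle :: "(int \<Rightarrow> int \<Rightarrow> int) \<Rightarrow> nat \<times> nat \<times> nat \<Rightarrow> nat \<times> nat \<times> nat" where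
  "shift_middle d = (\<lambda>(a, b, c).
     let x = int a + int b; y = int b + int c; t = int b + d x y
     in (nat (x - t), nat t, nat (y - t)))"

lemma shift_middle_eq:
  assumes "0 \<le> int b + d (int a + int b) (int b + int c)"
    and "int b + d (int a + int b) (int b + int c) \<le> min (int a + int b) (int b + int c)"
  obtains a' b' c' where "shift_middle d (a, b, c) = (a', b', c')"
    and "int a' + int b' = int a + int b" "int b' + int c' = int b + int c"
    and "int b' = int b + d (int a + int b) (int b + int c)"
  using assms by (simp add: shift_middle_def Let_def)

lemma shift_middle_cancel:
  assumes "0 \<le> int b + d (int a + int b) (int b + int c)"
    and "int b + d (int a + int b) (int b + int c) \<le> min (int a + int b) (int b + int c)"
  shows "shift_middle (\<lambda>x y. - d x y) (shift_middle d (a, b, c)) = (a, b, c)"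
proof -
  let ?x = "int a + int b" and ?y = "int b + int c"
  obtain a' b' c' where shift: "shift_middle d (a, b, c) = (a', b', c')"
    and x: "int a' + int b' = ?x" and y: "int b' + int c' = ?y"
    and b': "int b' = int b + d ?x ?y"
    using shift_middle_eq assms by blast
  have "shift_middle (\<lambda>x y. - d x y) (a', b', c') =
      (nat (?x - (int b' - d ?x ?y)), nat (int b' - d ?x ?y), nat (?y - (int b' - d ?x ?y)))"
    unfolding shift_middle_def Let_def prod.case x y by simp
  then show ?thesis
    using shift b' by simp
qed

definition fibred_set :: "(int \<Rightarrow> int \<Rightarrow> int \<Rightarrow> bool) \<Rightarrow> (nat \<times> nat \<times> nat) set" where
  "fibred_set P = {(a, b, c). P (int a + int b) (int b + int c) (int b)}"

text \<open>The fibre hypothesis below says that t \<mapsto> t + d x y maps the P-fibre over (x, y) onto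
  the Q-fibre; the bounds 0 \<le> t \<le> min x y describe exactly the triples of naturals with
  a + b = x and b + c = y.\<close>

lemma shift_middle_fibred_set:
  assumes fibre: "\<And>x y t. 0 \<le> x \<Longrightarrow> 0 \<le> y \<Longrightarrow>
      (0 \<le> t \<and> t \<le> min x y \<and> P x y t) \<longleftrightarrow>
      (0 \<le> t + d x y \<and> t + d x y \<le> min x y \<and> Q x y (t + d x y))"
    and p: "p \<in> fibred_set P"
  shows "shift_middle d p \<in> fibred_set Q"
    and "shift_middle (\<lambda>x y. - d x y) (shift_middle d p) = p"
proof -
  obtain a b c where p_eq: "p = (a, b, c)" and P: "P (int a + int b) (int b + int c) (int b)"
    using p unfolding fibred_set_def by auto
  let ?t = "int b + d (int a + int b) (int b + int c)"
  have in_fibre: "0 \<le> ?t" "?t \<le> min (int a + int b) (int b + int c)"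
    "Q (int a + int b) (int b + int c) ?t"
    using fibre[of "int a + int b" "int b + int c" "int b"] P by auto
  obtain a' b' c' where shift: "shift_middle d (a, b, c) = (a', b', c')"
    and x: "int a' + int b' = int a + int b" and y: "int b' + int c' = int b + int c"
    and b': "int b' = ?t"
    using shift_middle_eq in_fibre(1,2) by blast
  have "Q (int a' + int b') (int b' + int c') (int b')"
    by (subst x, subst y, subst b') (rule in_fibre(3))
  then show "shift_middle d p \<in> fibred_set Q"
    unfolding p_eq shift fibred_set_def by simp
  show "shift_middle (\<lambda>x y. - d x y) (shift_middle d p) = p"
    unfolding p_eq by (rule shift_middle_cancel[where d = d, OF in_fibre(1,2)])
qed

lemma bij_betw_shift_middle:
  assumes fibre: "\<And>x y t. 0 \<le> x \<Longrightarrow> 0 \<le> y \<Longrightarrow>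
      (0 \<le> t \<and> t \<le> min x y \<and> P x y t) \<longleftrightarrow>
      (0 \<le> t + d x y \<and> t + d x y \<le> min x y \<and> Q x y (t + d x y))"
  shows "bij_betw (shift_middle d) (fibred_set P) (fibred_set Q)"
proof (rule bij_betw_byWitness[where f' = "shift_middle (\<lambda>x y. - d x y)"])
  have fibre_inv: "(0 \<le> s \<and> s \<le> min x y \<and> Q x y s) \<longleftrightarrow>
      (0 \<le> s + - d x y \<and> s + - d x y \<le> min x y \<and> P x y (s + - d x y))"
    if "0 \<le> x" "0 \<le> y" for x y s
    using fibre[OF that, of "s - d x y"] by simp
  note forward = shift_middle_fibred_set[OF fibre]
  note backward = shift_middle_fibred_set[OF fibre_inv, unfolded minus_minus]
  show "\<forall>p\<in>fibred_set P. shift_middle (\<lambda>x y. - d x y) (shift_middle d p) = p"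
    using forward(2) by blast
  show "shift_middle d ` fibred_set P \<subseteq> fibred_set Q"
    using forward(1) by blast
  show "\<forall>p\<in>fibred_set Q. shift_middle d (shift_middle (\<lambda>x y. - d x y) p) = p"
    using backward(2) by blast
  show "shift_middle (\<lambda>x y. - d x y) ` fibred_set Q \<subseteq> fibred_set P"
    using backward(1) by blast
qed

definition S_lower :: "nat \<Rightarrow> nat \<Rightarrow> nat \<Rightarrow> nat \<Rightarrow> int \<Rightarrow> int \<Rightarrow> int" where
  "S_lower m1 m2 n1 n2 x y =
     max 0 (max (x - int m1) (max (x - int n1) (max (y - int m2) (max (y - int n2)
       (max (x + y - int m1 - int m2) (max (x + y - int n1 - int n2)
         (max (2*x - int m1 - int n1) (2*y - int m2 - int n2))))))))"

definition T_lower :: "nat \<Rightarrow> nat \<Rightarrow> nat \<Rightarrow> nat \<Rightarrow> int \<Rightarrow> int \<Rightarrow> int" where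
  "T_lower m1 m2 n1 n2 x y = max 0 (max (y - int n2) (x - int m1))"

definition T_upper :: "nat \<Rightarrow> nat \<Rightarrow> nat \<Rightarrow> nat \<Rightarrow> int \<Rightarrow> int \<Rightarrow> int" where
  "T_upper m1 m2 n1 n2 x y =
     min x (min y (min (int m2) (min (int n1) (min (int n1 - x + y) (int m2 + x - y)))))"

definition T_admissible :: "nat \<Rightarrow> nat \<Rightarrow> nat \<Rightarrow> nat \<Rightarrow> int \<Rightarrow> int \<Rightarrow> bool" where
  "T_admissible m1 m2 n1 n2 x y \<longleftrightarrow> 2*x - y \<le> int m1 + int n1 \<and> 2*y - x \<le> int m2 + int n2"

lemma S_A_fibred: "S_A m1 m2 n1 n2 = fibred_set (\<lambda>x y t. S_lower m1 m2 n1 n2 x y \<le> t)"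
proof -
  have "(a, b, c) \<in> S_A m1 m2 n1 n2 \<longleftrightarrow>
      (a, b, c) \<in> fibred_set (\<lambda>x y t. S_lower m1 m2 n1 n2 x y \<le> t)" for a b c
    unfolding S_A_def S_lower_def fibred_set_def max.bounded_iff
    by simp (intro iffI; (elim conjE; intro conjI; linarith))
  then show ?thesis
    by (metis prod_cases3 set_eqI)
qed

lemma T_A_fibred:
  "T_A m1 m2 n1 n2 = fibred_set (\<lambda>x y t.
     T_lower m1 m2 n1 n2 x y \<le> t \<and> t \<le> T_upper m1 m2 n1 n2 x y \<and> T_admissible m1 m2 n1 n2 x y)"
  unfolding T_A_def T_lower_def T_upper_def T_admissible_def fibred_set_def by auto

lemma S_fibre_nonempty_iff:
  fixes m1 m2 n1 n2 :: nat and x y :: int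
  assumes "0 \<le> x" "0 \<le> y"
  shows "S_lower m1 m2 n1 n2 x y \<le> min x y \<longleftrightarrow>
    T_lower m1 m2 n1 n2 x y \<le> T_upper m1 m2 n1 n2 x y \<and> T_admissible m1 m2 n1 n2 x y"
  using assms
  unfolding S_lower_def T_lower_def T_upper_def T_admissible_def max.bounded_iff min.bounded_iff
  by (intro iffI; (elim conjE; intro conjI; linarith))

lemma fibre_lengths_eq:
  fixes m1 m2 n1 n2 :: nat and x y :: int
  assumes "0 \<le> x" "0 \<le> y" "S_lower m1 m2 n1 n2 x y \<le> min x y"
  shows "T_upper m1 m2 n1 n2 x y - T_lower m1 m2 n1 n2 x y = min x y - S_lower m1 m2 n1 n2 x y"
proof -
  have "t \<le> min x y - S_lower m1 m2 n1 n2 x y \<longleftrightarrow>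
      t \<le> T_upper m1 m2 n1 n2 x y - T_lower m1 m2 n1 n2 x y" for t
    using assms unfolding S_lower_def T_lower_def T_upper_def le_diff_eq max_add_distrib_right
      max.bounded_iff min.bounded_iff
    by (intro iffI; (elim conjE; intro conjI; linarith))
  then show ?thesis
    by (metis order_antisym order_refl)
qed

lemma S_fibre_iff_T_fibre:
  fixes m1 m2 n1 n2 :: nat and x y t :: int
  assumes "0 \<le> x" "0 \<le> y"
  defines "L \<equiv> S_lower m1 m2 n1 n2 x y" and "l \<equiv> T_lower m1 m2 n1 n2 x y"
    and "u \<equiv> T_upper m1 m2 n1 n2 x y"
  shows "(0 \<le> t \<and> t \<le> min x y \<and> L \<le> t) \<longleftrightarrow>
    (0 \<le> t + (l - L) \<and> t + (l - L) \<le> min x y \<and> l \<le> t + (l - L) \<and>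
     t + (l - L) \<le> u \<and> T_admissible m1 m2 n1 n2 x y)"
proof -
  have bounds: "0 \<le> L" "0 \<le> l" "u \<le> min x y"
    unfolding L_def l_def u_def S_lower_def T_lower_def T_upper_def
    by (rule max.cobounded1, rule max.cobounded1, meson min.boundedI min.cobounded1 min.coboundedI2)
  show ?thesis
  proof (cases "L \<le> min x y")
    case True
    have "u - l = min x y - L" "T_admissible m1 m2 n1 n2 x y"
      using True fibre_lengths_eq[OF assms(1,2)] S_fibre_nonempty_iff[OF assms(1,2)]
      unfolding L_def l_def u_def by simp_all
    then show ?thesis
      using bounds by (intro iffI; (elim conjE; intro conjI; (assumption | linarith)))
  next
    case False
    then have "\<not> (l \<le> u \<and> T_admissible m1 m2 n1 n2 x y)"
      using S_fibre_nonempty_iff[OF assms(1,2)] unfolding L_def l_def u_def by blast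
    then have "\<not> (l \<le> t + (l - L) \<and> t + (l - L) \<le> u \<and> T_admissible m1 m2 n1 n2 x y)"
      by (meson order_trans)
    moreover have "\<not> (t \<le> min x y \<and> L \<le> t)"
      using False by linarith
    ultimately show ?thesis
      by blast
  qed
qed

theorem lemma4p2:
  fixes m1 m2 n1 n2 :: nat
  shows "\<exists>f. bij_betw f (S_A m1 m2 n1 n2) (T_A m1 m2 n1 n2)"
proof -
  have "bij_betw (shift_middle (\<lambda>x y. T_lower m1 m2 n1 n2 x y - S_lower m1 m2 n1 n2 x y))
      (S_A m1 m2 n1 n2) (T_A m1 m2 n1 n2)"
    unfolding S_A_fibred T_A_fibred
    by (rule bij_betw_shift_middle) (simp only: S_fibre_iff_T_fibre conj_assoc)
  then show ?thesis by blast
qed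

end
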